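(* Let $\mathcal C$ and $\mathcal D$ be categories and $F\colon\mathcal C\to\mathcal D$ a functor. (1) If $\mathcal C$ has AP and $F$ is essentially wide and absorbing, then $\mathcal D$ has AP. (2) If $\mathcal C$ has CAP and $F$ is cofinal and absorbing, then $\mathcal D$ has CAP. (3) If $\mathcal C$ has WAP and $F$ is cofinal and weakly absorbing, then $\mathcal D$ has WAP. In particular, if $F$ is wide and star-surjective, then each of AP, CAP and WAP for $\mathcal C$ implies the same property for $\mathcal D$.
   Context: In a category, an object $A$ is an amalgamation base if for all morphisms $\alpha_1\colon A\to B$, $\alpha_2\colon A\to C$ there are an object $D$ and morphisms $\beta_1\colon B\to D$, $\beta_2\colon C\to D$ with $\beta_1\alpha_1=\beta_2\alpha_2$. AP: every object is an amalgamation base. CAP: every object $A_0$ has a morphism into an amalgamation base. WAP: every object $A_0$ has a morphism $i\colon A_0\to A$ that is amalgamable, i.e. for all $\alpha_1\colon A\to B$, $\alpha_2\colon A\to C$ there are $\beta_1\colon B\to D$, $\beta_2\colon C\to D$ with $\beta_1\alpha_1 i=\beta_2\alpha_2 i$. A functor $F\colon\mathcal C\to\mathcal D$ is: wide if every $\mathcal D$-object equals $F(X')$ for some $\mathcal C$-object $X'$; essentially wide if every $\mathcal D$-object is isomorphic to some $F(X')$; cofinal if for every $\mathcal D$-object $X$ there are a $\mathcal C$-object $X'$ and a $\mathcal D$-morphism $X\to F(X')$; star-surjective if for every $\mathcal C$-object $X'$ and $\mathcal D$-morphism $f\colon F(X')\to Y$ there is a $\mathcal C$-morphism $f'\colon X'\to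 Y'$ with $F(f')=f$; absorbing if for every $\mathcal C$-object $X'$ and $\mathcal D$-morphism $f\colon F(X')\to Y$ there are a $\mathcal C$-morphism $f'\colon X'\to Y'$ and a $\mathcal D$-morphism $g\colon Y\to F(Y')$ with $F(f')=g\circ f$; weakly absorbing if for every $\mathcal C$-object $X'$ there is a $\mathcal D$-morphism $e\colon F(X')\to X$ such that for every $\mathcal D$-morphism $f\colon X\to Y$ there are a $\mathcal C$-morphism $f'\colon X'\to Y'$ and a $\mathcal D$-morphism $g\colon Y\to F(Y')$ with $F(f')=g\circ f\circ e$. *)

theory Defs
  imports Main
begin

(* Categories presented by objects, arrows, domain, codomain, composition, identities.
   cmp C g f  denotes  g \<circ> f  (first f, then g). *)
record ('o,'m) category =
  ob  :: "'o set"
  ar  :: "'m set"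
  dom :: "'m \<Rightarrow> 'o"
  cod :: "'m \<Rightarrow> 'o"
  cmp :: "'m \<Rightarrow> 'm \<Rightarrow> 'm"
  idt :: "'o \<Rightarrow> 'm"

definition hom :: "('o,'m) category \<Rightarrow> 'o \<Rightarrow> 'o \<Rightarrow> 'm set" where
  "hom C X Y = {f \<in> ar C. dom C f = X \<and> cod C f = Y}"

definition is_category :: "('o,'m) category \<Rightarrow> bool" where
  "is_category C \<longleftrightarrow>
     (\<forall>f\<in>ar C. dom C f \<in> ob C \<and> cod C f \<in> ob C) \<and>
     (\<forall>X\<in>ob C. idt C X \<in> hom C X X) \<and>
     (\<forall>f\<in>ar C. \<forall>g\<in>ar C. cod C f = dom C g \<longrightarrow> cmp C g f \<in> hom C (dom C f) (cod C g)) \<and>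
     (\<forall>f\<in>ar C. cmp C f (idt C (dom C f)) = f \<and> cmp C (idt C (cod C f)) f = f) \<and>
     (\<forall>f\<in>ar C. \<forall>g\<in>ar C. \<forall>h\<in>ar C. cod C f = dom C g \<longrightarrow> cod C g = dom C h \<longrightarrow>
         cmp C h (cmp C g f) = cmp C (cmp C h g) f)"

definition is_functor ::
  "('a,'b) category \<Rightarrow> ('c,'d) category \<Rightarrow> ('a \<Rightarrow> 'c) \<Rightarrow> ('b \<Rightarrow> 'd) \<Rightarrow> bool" where
  "is_functor C D Fo Fm \<longleftrightarrow> is_category C \<and> is_category D \<and>
     (\<forall>X\<in>ob C. Fo X \<in> ob D) \<and>
     (\<forall>f\<in>ar C. Fm f \<in> hom D (Fo (dom C f)) (Fo (cod C f))) \<and>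
     (\<forall>X\<in>ob C. Fm (idt C X) = idt D (Fo X)) \<and>
     (\<forall>f\<in>ar C. \<forall>g\<in>ar C. cod C f = dom C g \<longrightarrow> Fm (cmp C g f) = cmp D (Fm g) (Fm f))"

definition isomorphic :: "('o,'m) category \<Rightarrow> 'o \<Rightarrow> 'o \<Rightarrow> bool" where
  "isomorphic C X Y \<longleftrightarrow> (\<exists>f g. f \<in> hom C X Y \<and> g \<in> hom C Y X \<and>
       cmp C g f = idt C X \<and> cmp C f g = idt C Y)"

definition amalgamation_base :: "('o,'m) category \<Rightarrow> 'o \<Rightarrow> bool" where
  "amalgamation_base C A \<longleftrightarrow> A \<in> ob C \<and>
     (\<forall>B B' a1 a2. a1 \<in> hom C A B \<longrightarrow> a2 \<in> hom C A B' \<longrightarrow>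
        (\<exists>E b1 b2. b1 \<in> hom C B E \<and> b2 \<in> hom C B' E \<and> cmp C b1 a1 = cmp C b2 a2))"

definition AP :: "('o,'m) category \<Rightarrow> bool" where
  "AP C \<longleftrightarrow> (\<forall>A\<in>ob C. amalgamation_base C A)"

definition CAP :: "('o,'m) category \<Rightarrow> bool" where
  "CAP C \<longleftrightarrow> (\<forall>A0\<in>ob C. \<exists>A f. f \<in> hom C A0 A \<and> amalgamation_base C A)"

definition amalgamable :: "('o,'m) category \<Rightarrow> 'm \<Rightarrow> bool" where
  "amalgamable C i \<longleftrightarrow> i \<in> ar C \<and>
     (\<forall>B B' a1 a2. a1 \<in> hom C (cod C i) B \<longrightarrow> a2 \<in> hom C (cod C i) B' \<longrightarrow>
        (\<exists>E b1 b2. b1 \<in> hom C B E \<and> b2 \<in> hom C B' E \<and>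
           cmp C b1 (cmp C a1 i) = cmp C b2 (cmp C a2 i)))"

definition WAP :: "('o,'m) category \<Rightarrow> bool" where
  "WAP C \<longleftrightarrow> (\<forall>A0\<in>ob C. \<exists>A i. i \<in> hom C A0 A \<and> amalgamable C i)"

definition wide where
  "wide C D Fo \<longleftrightarrow> (\<forall>X\<in>ob D. \<exists>X'\<in>ob C. X = Fo X')"

definition essentially_wide where
  "essentially_wide C D Fo \<longleftrightarrow> (\<forall>X\<in>ob D. \<exists>X'\<in>ob C. isomorphic D X (Fo X'))"

definition cofinal where
  "cofinal C D Fo \<longleftrightarrow> (\<forall>X\<in>ob D. \<exists>X'\<in>ob C. \<exists>f. f \<in> hom D X (Fo X'))"

definition star_surjective where
  "star_surjective C D Fo Fm \<longleftrightarrow> (\<forall>X'\<in>ob C. \<forall>Y f. f \<in> hom D (Fo X') Y \<longrightarrow>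
      (\<exists>Y' f'. f' \<in> hom C X' Y' \<and> Fm f' = f))"

definition absorbing where
  "absorbing C D Fo Fm \<longleftrightarrow> (\<forall>X'\<in>ob C. \<forall>Y f. f \<in> hom D (Fo X') Y \<longrightarrow>
      (\<exists>Y' f' g. f' \<in> hom C X' Y' \<and> g \<in> hom D Y (Fo Y') \<and> Fm f' = cmp D g f))"

definition weakly_absorbing where
  "weakly_absorbing C D Fo Fm \<longleftrightarrow> (\<forall>X'\<in>ob C. \<exists>X e. e \<in> hom D (Fo X') X \<and>
      (\<forall>Y f. f \<in> hom D X Y \<longrightarrow>
         (\<exists>Y' f' g. f' \<in> hom C X' Y' \<and> g \<in> hom D Y (Fo Y') \<and> Fm f' = cmp D g (cmp D f e))))"

end

theory Submission
  imports Defs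
begin

text \<open>
  Given a C-arrow i amalgamable in C and a D-arrow e out of Fo (cod i) through which every further
  D-arrow is absorbed into the image of F, the arrow e \<circ> Fm i is amalgamable in D: absorb the two
  legs a_k as Fm f_k = g_k \<circ> a_k \<circ> e, amalgamate the f_k over i in C, and apply F.
  Amalgamability is stable under precomposition, so cofinality carries it to every object of D.
  For AP take for i an identity and for e the inverse of an isomorphism X \<cong> Fo X', for CAP take
  both to be identities, and for WAP take e to be the witness of weak absorption.
\<close>

lemma hom_memberD:
  assumes "f \<in> hom C X Y"
  shows "f \<in> ar C" "dom C f = X" "cod C f = Y"
  using assms unfolding hom_def by auto

lemma category_hom_ob:
  assumes "is_category C" "f \<in> hom C X Y"
  shows "X \<in> ob C" "Y \<in> ob C"
  using assms unfolding is_category_def hom_def by auto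

lemma category_idt_hom:
  assumes "is_category C" "X \<in> ob C"
  shows "idt C X \<in> hom C X X"
  using assms unfolding is_category_def by auto

lemma category_comp_hom:
  assumes "is_category C" "f \<in> hom C X Y" "g \<in> hom C Y Z"
  shows "cmp C g f \<in> hom C X Z"
  using assms unfolding is_category_def hom_def by auto

lemma category_comp_idt_right:
  assumes "is_category C" "f \<in> hom C X Y"
  shows "cmp C f (idt C X) = f"
  using assms unfolding is_category_def hom_def by auto

lemma category_comp_idt_left:
  assumes "is_category C" "f \<in> hom C X Y"
  shows "cmp C (idt C Y) f = f"
  using assms unfolding is_category_def hom_def by auto

lemma category_comp_assoc:
  assumes "is_category C" "f \<in> hom C X Y" "g \<in> hom C Y Z" "h \<in> hom C Z W"
  shows "cmp C h (cmp C g f) = cmp C (cmp C h g) f"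
  using assms unfolding is_category_def hom_def by auto

lemma functor_categories:
  assumes "is_functor C D Fo Fm"
  shows "is_category C" "is_category D"
  using assms unfolding is_functor_def by auto

lemma functor_hom:
  assumes "is_functor C D Fo Fm" "f \<in> hom C X Y"
  shows "Fm f \<in> hom D (Fo X) (Fo Y)"
  using assms unfolding is_functor_def hom_def by auto

lemma functor_comp:
  assumes "is_functor C D Fo Fm" "f \<in> hom C X Y" "g \<in> hom C Y Z"
  shows "Fm (cmp C g f) = cmp D (Fm g) (Fm f)"
  using assms unfolding is_functor_def hom_def by auto

lemma functor_ob:
  assumes "is_functor C D Fo Fm" "X \<in> ob C"
  shows "Fo X \<in> ob D"
  using assms unfolding is_functor_def by auto

lemma functor_idt:
  assumes "is_functor C D Fo Fm" "X \<in> ob C"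
  shows "Fm (idt C X) = idt D (Fo X)"
  using assms unfolding is_functor_def by auto

lemma amalgamation_base_iff_amalgamable_idt:
  assumes "is_category C"
  shows "amalgamation_base C A \<longleftrightarrow> A \<in> ob C \<and> amalgamable C (idt C A)"
proof (cases "A \<in> ob C")
  case True
  with assms have "idt C A \<in> hom C A A" by (rule category_idt_hom)
  moreover have "cmp C a (idt C A) = a" if "a \<in> hom C A B" for a B
    using assms that by (rule category_comp_idt_right)
  ultimately show ?thesis
    unfolding amalgamation_base_def amalgamable_def by (auto dest: hom_memberD)
qed (simp add: amalgamation_base_def)

lemma amalgamable_comp:
  assumes C: "is_category C" and i: "amalgamable C i" and j: "j \<in> hom C W (dom C i)"
  shows "amalgamable C (cmp C i j)"
  unfolding amalgamable_def
proof (intro conjI allI impI)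
  have i_hom: "i \<in> hom C (dom C i) (cod C i)"
    using i unfolding amalgamable_def hom_def by auto
  then have ij: "cmp C i j \<in> hom C W (cod C i)"
    using C j by (simp add: category_comp_hom)
  then show "cmp C i j \<in> ar C" by (rule hom_memberD)
  fix B B' a1 a2
  assume "a1 \<in> hom C (cod C (cmp C i j)) B" and "a2 \<in> hom C (cod C (cmp C i j)) B'"
  then have a1: "a1 \<in> hom C (cod C i) B" and a2: "a2 \<in> hom C (cod C i) B'"
    using hom_memberD(3)[OF ij] by simp_all
  obtain E b1 b2 where b1: "b1 \<in> hom C B E" and b2: "b2 \<in> hom C B' E"
    and eq: "cmp C b1 (cmp C a1 i) = cmp C b2 (cmp C a2 i)"
    using i a1 a2 unfolding amalgamable_def by blast
  have "cmp C b (cmp C a (cmp C i j)) = cmp C (cmp C b (cmp C a i)) j"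
    if a: "a \<in> hom C (cod C i) Y" and b: "b \<in> hom C Y E" for a b Y
  proof -
    have ai: "cmp C a i \<in> hom C (dom C i) Y"
      using C i_hom a by (rule category_comp_hom)
    show ?thesis
      using category_comp_assoc[OF C j i_hom a] category_comp_assoc[OF C j ai b] by simp
  qed
  then show "\<exists>E b1 b2. b1 \<in> hom C B E \<and> b2 \<in> hom C B' E \<and>
      cmp C b1 (cmp C a1 (cmp C i j)) = cmp C b2 (cmp C a2 (cmp C i j))"
    using a1 a2 b1 b2 eq by metis
qed

text \<open>The condition that weak absorption imposes on its witness e.\<close>

definition absorbing_arrow ::
  "('a,'b) category \<Rightarrow> ('c,'d) category \<Rightarrow> ('a \<Rightarrow> 'c) \<Rightarrow> ('b \<Rightarrow> 'd) \<Rightarrow> 'a \<Rightarrow> 'd \<Rightarrow> bool" where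
  "absorbing_arrow C D Fo Fm X' e \<longleftrightarrow> (\<forall>Y f. f \<in> hom D (cod D e) Y \<longrightarrow>
      (\<exists>Y' f' g. f' \<in> hom C X' Y' \<and> g \<in> hom D Y (Fo Y') \<and> Fm f' = cmp D g (cmp D f e)))"

lemma weakly_absorbing_iff:
  "weakly_absorbing C D Fo Fm \<longleftrightarrow>
     (\<forall>X'\<in>ob C. \<exists>X e. e \<in> hom D (Fo X') X \<and> absorbing_arrow C D Fo Fm X' e)"
  unfolding weakly_absorbing_def absorbing_arrow_def hom_def by auto

lemma absorbing_imp_absorbing_arrow:
  assumes "is_category D" "absorbing C D Fo Fm" "X' \<in> ob C" "e \<in> hom D (Fo X') X"
  shows "absorbing_arrow C D Fo Fm X' e"
  unfolding absorbing_arrow_def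
proof (intro allI impI)
  fix Y f
  assume "f \<in> hom D (cod D e) Y"
  then have "f \<in> hom D X Y" using hom_memberD(3)[OF assms(4)] by simp
  with assms(1,4) have "cmp D f e \<in> hom D (Fo X') Y" by (rule category_comp_hom)
  with assms show "\<exists>Y' f' g. f' \<in> hom C X' Y' \<and> g \<in> hom D Y (Fo Y') \<and> Fm f' = cmp D g (cmp D f e)"
    unfolding absorbing_def by blast
qed

lemma absorbing_imp_weakly_absorbing:
  assumes F: "is_functor C D Fo Fm" and ab: "absorbing C D Fo Fm"
  shows "weakly_absorbing C D Fo Fm"
  unfolding weakly_absorbing_iff
proof
  fix X' assume X': "X' \<in> ob C"
  have "idt D (Fo X') \<in> hom D (Fo X') (Fo X')"
    using F X' by (simp add: category_idt_hom functor_categories functor_ob)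
  with ab X' F show "\<exists>X e. e \<in> hom D (Fo X') X \<and> absorbing_arrow C D Fo Fm X' e"
    by (blast intro: absorbing_imp_absorbing_arrow functor_categories)
qed

lemma amalgamable_functor_image:
  assumes F: "is_functor C D Fo Fm"
    and i: "i \<in> hom C A0 A" "amalgamable C i"
    and e: "e \<in> hom D (Fo A) Z" "absorbing_arrow C D Fo Fm A e"
  shows "amalgamable D (cmp D e (Fm i))"
  unfolding amalgamable_def
proof (intro conjI allI impI)
  note C = functor_categories(1)[OF F] and D = functor_categories(2)[OF F]
  have Fi: "Fm i \<in> hom D (Fo A0) (Fo A)"
    using F i(1) by (rule functor_hom)
  have eFi: "cmp D e (Fm i) \<in> hom D (Fo A0) Z"
    using D Fi e(1) by (rule category_comp_hom)
  then show "cmp D e (Fm i) \<in> ar D" by (rule hom_memberD)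
  have leg: "cmp D (cmp D (Fm b) g) (cmp D a (cmp D e (Fm i))) = Fm (cmp C b (cmp C f i))"
    if a: "a \<in> hom D Z B" and f: "f \<in> hom C A Y" and g: "g \<in> hom D B (Fo Y)"
      and absorb: "Fm f = cmp D g (cmp D a e)" and b: "b \<in> hom C Y E" for a b f g B Y E
  proof -
    have ae: "cmp D a e \<in> hom D (Fo A) B" using D e(1) a by (rule category_comp_hom)
    have Fb: "Fm b \<in> hom D (Fo Y) (Fo E)" using F b by (rule functor_hom)
    have Fbg: "cmp D (Fm b) g \<in> hom D B (Fo E)" using D g Fb by (rule category_comp_hom)
    have "cmp D (cmp D (Fm b) g) (cmp D a (cmp D e (Fm i)))
        = cmp D (cmp D (cmp D (Fm b) g) (cmp D a e)) (Fm i)"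
      by (simp add: category_comp_assoc[OF D Fi e(1) a] category_comp_assoc[OF D Fi ae Fbg])
    also have "\<dots> = cmp D (cmp D (Fm b) (Fm f)) (Fm i)"
      by (simp add: category_comp_assoc[OF D ae g Fb] absorb)
    also have "\<dots> = Fm (cmp C (cmp C b f) i)"
      using functor_comp[OF F f b] functor_comp[OF F i(1) category_comp_hom[OF C f b]] by simp
    also have "\<dots> = Fm (cmp C b (cmp C f i))"
      by (simp add: category_comp_assoc[OF C i(1) f b])
    finally show ?thesis .
  qed
  fix B B' a1 a2
  assume "a1 \<in> hom D (cod D (cmp D e (Fm i))) B" and "a2 \<in> hom D (cod D (cmp D e (Fm i))) B'"
  then have a1: "a1 \<in> hom D Z B" and a2: "a2 \<in> hom D Z B'"
    using hom_memberD(3)[OF eFi] by simp_all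
  obtain Y1 f1 g1 where f1: "f1 \<in> hom C A Y1" and g1: "g1 \<in> hom D B (Fo Y1)"
    and absorb1: "Fm f1 = cmp D g1 (cmp D a1 e)"
    using e a1 hom_memberD(3)[OF e(1)] unfolding absorbing_arrow_def by blast
  obtain Y2 f2 g2 where f2: "f2 \<in> hom C A Y2" and g2: "g2 \<in> hom D B' (Fo Y2)"
    and absorb2: "Fm f2 = cmp D g2 (cmp D a2 e)"
    using e a2 hom_memberD(3)[OF e(1)] unfolding absorbing_arrow_def by blast
  obtain E b1 b2 where b1: "b1 \<in> hom C Y1 E" and b2: "b2 \<in> hom C Y2 E"
    and amalg: "cmp C b1 (cmp C f1 i) = cmp C b2 (cmp C f2 i)"
    using i f1 f2 hom_memberD(3)[OF i(1)] unfolding amalgamable_def by blast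
  have "cmp D (Fm b1) g1 \<in> hom D B (Fo E)" "cmp D (Fm b2) g2 \<in> hom D B' (Fo E)"
    using D F g1 g2 b1 b2 by (blast intro: category_comp_hom functor_hom)+
  moreover have "cmp D (cmp D (Fm b1) g1) (cmp D a1 (cmp D e (Fm i)))
      = cmp D (cmp D (Fm b2) g2) (cmp D a2 (cmp D e (Fm i)))"
    using leg[OF a1 f1 g1 absorb1 b1] leg[OF a2 f2 g2 absorb2 b2] amalg by simp
  ultimately show "\<exists>E b1 b2. b1 \<in> hom D B E \<and> b2 \<in> hom D B' E \<and>
      cmp D b1 (cmp D a1 (cmp D e (Fm i))) = cmp D b2 (cmp D a2 (cmp D e (Fm i)))"
    by blast
qed

lemma amalgamation_base_functor_image:
  assumes F: "is_functor C D Fo Fm" and ab: "absorbing C D Fo Fm"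
    and A: "amalgamation_base C A"
  shows "amalgamation_base D (Fo A)"
proof -
  note C = functor_categories(1)[OF F] and D = functor_categories(2)[OF F]
  have A_ob: "A \<in> ob C" and idA: "amalgamable C (idt C A)"
    using A amalgamation_base_iff_amalgamable_idt[OF C] by simp_all
  have FA_ob: "Fo A \<in> ob D" using F A_ob by (rule functor_ob)
  have idFA: "idt D (Fo A) \<in> hom D (Fo A) (Fo A)" using D FA_ob by (rule category_idt_hom)
  have "amalgamable D (cmp D (idt D (Fo A)) (Fm (idt C A)))"
    using F category_idt_hom[OF C A_ob] idA idFA
      absorbing_imp_absorbing_arrow[OF D ab A_ob idFA]
    by (rule amalgamable_functor_image)
  then have "amalgamable D (idt D (Fo A))"
    using category_comp_idt_right[OF D idFA] functor_idt[OF F A_ob] by simp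
  with FA_ob show ?thesis using amalgamation_base_iff_amalgamable_idt[OF D] by simp
qed

lemma AP_transfer:
  assumes F: "is_functor C D Fo Fm" and ap: "AP C"
    and ew: "essentially_wide C D Fo" and ab: "absorbing C D Fo Fm"
  shows "AP D"
  unfolding AP_def
proof
  note C = functor_categories(1)[OF F] and D = functor_categories(2)[OF F]
  fix X assume X: "X \<in> ob D"
  then obtain X' u v where X': "X' \<in> ob C"
    and u: "u \<in> hom D X (Fo X')" and v: "v \<in> hom D (Fo X') X" and vu: "cmp D v u = idt D X"
    using ew unfolding essentially_wide_def isomorphic_def by blast
  have idX': "amalgamable C (idt C X')"
    using ap X' amalgamation_base_iff_amalgamable_idt[OF C] unfolding AP_def by blast
  have "amalgamable D (cmp D v (Fm (idt C X')))"
    using F category_idt_hom[OF C X'] idX' v absorbing_imp_absorbing_arrow[OF D ab X' v]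
    by (rule amalgamable_functor_image)
  then have "amalgamable D v"
    using functor_idt[OF F X'] category_comp_idt_right[OF D v] by simp
  moreover have "u \<in> hom D X (dom D v)" using u hom_memberD(2)[OF v] by simp
  ultimately have "amalgamable D (cmp D v u)" by (rule amalgamable_comp[OF D])
  with X vu show "amalgamation_base D X"
    using amalgamation_base_iff_amalgamable_idt[OF D] by simp
qed

lemma CAP_transfer:
  assumes F: "is_functor C D Fo Fm" and cap: "CAP C"
    and cf: "cofinal C D Fo" and ab: "absorbing C D Fo Fm"
  shows "CAP D"
  unfolding CAP_def
proof
  fix X assume "X \<in> ob D"
  then obtain X' f where X': "X' \<in> ob C" and f: "f \<in> hom D X (Fo X')"
    using cf unfolding cofinal_def by blast
  then obtain A h where h: "h \<in> hom C X' A" and A: "amalgamation_base C A"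
    using cap unfolding CAP_def by blast
  have "cmp D (Fm h) f \<in> hom D X (Fo A)"
    using functor_categories(2)[OF F] f functor_hom[OF F h] by (rule category_comp_hom)
  with amalgamation_base_functor_image[OF F ab A]
  show "\<exists>A f. f \<in> hom D X A \<and> amalgamation_base D A" by blast
qed

lemma WAP_transfer:
  assumes F: "is_functor C D Fo Fm" and wap: "WAP C"
    and cf: "cofinal C D Fo" and wab: "weakly_absorbing C D Fo Fm"
  shows "WAP D"
  unfolding WAP_def
proof
  note C = functor_categories(1)[OF F] and D = functor_categories(2)[OF F]
  fix X assume "X \<in> ob D"
  then obtain X' f where X': "X' \<in> ob C" and f: "f \<in> hom D X (Fo X')"
    using cf unfolding cofinal_def by blast
  then obtain A i where i: "i \<in> hom C X' A" and i_amalg: "amalgamable C i"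
    using wap unfolding WAP_def by blast
  obtain Z e where e: "e \<in> hom D (Fo A) Z" and e_absorbing: "absorbing_arrow C D Fo Fm A e"
    using wab category_hom_ob(2)[OF C i] unfolding weakly_absorbing_iff by blast
  have eFi: "cmp D e (Fm i) \<in> hom D (Fo X') Z"
    using D functor_hom[OF F i] e by (rule category_comp_hom)
  have "amalgamable D (cmp D e (Fm i))"
    using F i i_amalg e e_absorbing by (rule amalgamable_functor_image)
  then have "amalgamable D (cmp D (cmp D e (Fm i)) f)"
    using amalgamable_comp[OF D] f hom_memberD(2)[OF eFi] by simp
  moreover have "cmp D (cmp D e (Fm i)) f \<in> hom D X Z"
    using D f eFi by (rule category_comp_hom)
  ultimately show "\<exists>A i. i \<in> hom D X A \<and> amalgamable D i" by blast
qed

lemma wide_imp_essentially_wide: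
  assumes "is_category D" "wide C D Fo"
  shows "essentially_wide C D Fo"
  using assms category_idt_hom[OF assms(1)] category_comp_idt_left[OF assms(1)]
  unfolding wide_def essentially_wide_def isomorphic_def by metis

lemma essentially_wide_imp_cofinal:
  assumes "essentially_wide C D Fo"
  shows "cofinal C D Fo"
  using assms unfolding essentially_wide_def isomorphic_def cofinal_def by blast

lemma star_surjective_imp_absorbing:
  assumes F: "is_functor C D Fo Fm" and ss: "star_surjective C D Fo Fm"
  shows "absorbing C D Fo Fm"
  unfolding absorbing_def
proof (intro ballI allI impI)
  fix X' Y f assume "X' \<in> ob C" and f: "f \<in> hom D (Fo X') Y"
  then obtain Y' f' where f': "f' \<in> hom C X' Y'" and lift: "Fm f' = f"
    using ss unfolding star_surjective_def by blast
  have Y: "Y = Fo Y'"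
    using hom_memberD(3)[OF f] hom_memberD(3)[OF functor_hom[OF F f']] lift by simp
  have "idt D Y \<in> hom D Y Y"
    using functor_categories(2)[OF F] category_hom_ob(2)[OF functor_categories(2)[OF F] f]
    by (rule category_idt_hom)
  with f' Y lift category_comp_idt_left[OF functor_categories(2)[OF F] f]
  show "\<exists>Y' f' g. f' \<in> hom C X' Y' \<and> g \<in> hom D Y (Fo Y') \<and> Fm f' = cmp D g f"
    by metis
qed

theorem proposition3p7:
  fixes C :: "('a,'b) category" and D :: "('c,'d) category"
    and Fo :: "'a \<Rightarrow> 'c" and Fm :: "'b \<Rightarrow> 'd"
  assumes "is_functor C D Fo Fm"
  shows "(AP C \<and> essentially_wide C D Fo \<and> absorbing C D Fo Fm \<longrightarrow> AP D)
    \<and> (CAP C \<and> cofinal C D Fo \<and> absorbing C D Fo Fm \<longrightarrow> CAP D)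
    \<and> (WAP C \<and> cofinal C D Fo \<and> weakly_absorbing C D Fo Fm \<longrightarrow> WAP D)
    \<and> (wide C D Fo \<and> star_surjective C D Fo Fm \<longrightarrow>
         (AP C \<longrightarrow> AP D) \<and> (CAP C \<longrightarrow> CAP D) \<and> (WAP C \<longrightarrow> WAP D))"
proof -
  note D = functor_categories(2)[OF assms]
  have "essentially_wide C D Fo" "cofinal C D Fo" "absorbing C D Fo Fm" "weakly_absorbing C D Fo Fm"
    if "wide C D Fo" "star_surjective C D Fo Fm"
    using that D assms
    by (auto intro: wide_imp_essentially_wide essentially_wide_imp_cofinal
        star_surjective_imp_absorbing absorbing_imp_weakly_absorbing)
  with AP_transfer[OF assms] CAP_transfer[OF assms] WAP_transfer[OF assms] show ?thesis
    by blast
qed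

end
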